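(* Let $q$ be a prime power and $a,r,g,h,m$ positive integers with $a\le r\le q+1$, $m\ge h+a$ and $ga+h<gr$; put $n=rg$. If $q^m\ge \frac{mn}{r}$, then there exists an MR $(n,r,h,a)$-LRC over a field of size $\ell=q^{\min\{mh,\frac{mn}{r}\}}$.
   Context: Definition: let $\ell$ be a prime power, $a,g,r,h$ positive integers with $ga+h<gr$, $n=gr$, $k=n-ga-h$. An MR (maximally recoverable) $(n,r,h,a)_\ell$-LRC is an $[n,k]$ linear code over $\mathbb{F}_\ell$ with a parity-check matrix $H$ of the block form whose first $ga$ rows are block diagonal with diagonal blocks $A_1,\dots,A_g$ (each $a\times r$, coordinates split into $g$ consecutive groups of size $r$) and whose last $h$ rows are $(D_1|\cdots|D_g)$ with each $D_i$ of size $h\times r$, such that (i) each $A_i$ generates an $[r,a,r-a+1]_\ell$ MDS code, and (ii) every set of $ag+h$ columns of $H$ consisting of any $a$ columns from each group together with any $h$ further columns is linearly independent over $\mathbb{F}_\ell$. "Over a field of size $\ell$" means an MR $(n,r,h,a)_\ell$-LRC. *)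

theory Defs
  imports Complex_Main "HOL-Computational_Algebra.Primes"
begin

text \<open>Matrices over a field 'F are functions nat => nat => 'F (row, column),
only entries with indices in range are relevant.\<close>

definition prime_power :: "nat \<Rightarrow> bool" where
  "prime_power q \<longleftrightarrow> (\<exists>p k. prime p \<and> k > 0 \<and> q = p ^ k)"

definition mds_generator :: "(nat \<Rightarrow> nat \<Rightarrow> 'F::field) \<Rightarrow> nat \<Rightarrow> nat \<Rightarrow> bool" where
  "mds_generator A a r \<longleftrightarrow>
     (\<forall>c. (\<forall>j<r. (\<Sum>i<a. c i * A i j) = 0) \<longrightarrow> (\<forall>i<a. c i = 0)) \<and>
     Min {card {j. j < r \<and> (\<Sum>i<a. c i * A i j) \<noteq> 0} | c. \<exists>i<a. c i \<noteq> 0} = r - a + 1"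

definition cols_indep :: "(nat \<Rightarrow> nat \<Rightarrow> 'F::field) \<Rightarrow> nat \<Rightarrow> nat set \<Rightarrow> bool" where
  "cols_indep H nrows S \<longleftrightarrow>
     (\<forall>c. (\<forall>i<nrows. (\<Sum>j\<in>S. c j * H i j) = 0) \<longrightarrow> (\<forall>j\<in>S. c j = 0))"

text \<open>H is a (g*a+h) x (g*r) parity-check matrix of an MR (n,r,h,a)-LRC, n = g*r,
  i.e. of an [n, n-ga-h] code: rows independent (so the kernel has dimension n-ga-h),
  the first g*a rows are block diagonal with a x r blocks A_1..A_g (coordinates
  split into g consecutive groups of size r), each A_b generates an MDS [r,a,r-a+1]
  code, and every set of ga+h columns containing a columns from each group
  (plus h further columns) is linearly independent.\<close>
definition MR_LRC_parity_check ::
  "(nat \<Rightarrow> nat \<Rightarrow> 'F::field) \<Rightarrow> nat \<Rightarrow> nat \<Rightarrow> nat \<Rightarrow> nat \<Rightarrow> bool" where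
  "MR_LRC_parity_check H g r h a \<longleftrightarrow>
     (\<forall>c. (\<forall>j<g*r. (\<Sum>i<g*a+h. c i * H i j) = 0) \<longrightarrow> (\<forall>i<g*a+h. c i = 0)) \<and>
     (\<forall>i<g*a. \<forall>j<g*r. j div r \<noteq> i div a \<longrightarrow> H i j = 0) \<and>
     (\<forall>b<g. mds_generator (\<lambda>i j. H (b*a + i) (b*r + j)) a r) \<and>
     (\<forall>S. S \<subseteq> {..<g*r} \<and> card S = g*a + h \<and>
          (\<forall>b<g. a \<le> card (S \<inter> {b*r..<(b+1)*r})) \<longrightarrow> cols_indep H (g*a+h) S)"

end

theory Submission
  imports Defs "HOL-Computational_Algebra.Polynomial" "HOL-Library.FuncSet"
begin

(* Let K = F_q and L = F_(q^m), realised inside F as the fixed sets pow_fixed q and pow_fixed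
   (q^m), and let s = min h g, so that |F| = |L|^s. Column j = b r + u of the parity-check matrix
   (group b, position u) carries in its a local rows the point pt u of the projective line over K
   on the rational normal curve, so every group is a projective Reed-Solomon code, which is MDS;
   r <= q + 1 leaves room for r distinct points. Its h global rows carry the Frobenius twists
   beta_j^(q^i), i < h, of beta_j = lambda_b * P(pt u). Here P(x) = sum_t v_t(x) w_t, with v the
   rational normal curve of degree k - 1, k = min r (a + h), and w_0, ..., w_(k-1) in L
   independent over K (possible as k <= m); and lambda_b = sum_i xi_b^i theta_i, with distinct
   xi_b in L (g <= q^m) and theta_0, ..., theta_(s-1) in F independent over L.

   For an admissible column set S (a columns in each group and h more), the vectors on S killed
   by the local rows form a space with at most |F|^h elements, and beta is independent over K on
   it: a K-valued such vector vanishes on every group meeting S in at most a columns, the block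
   weights lambda_b of the at most s other groups are independent over L, and within a group the
   at most k values P(pt u) are independent over K. A Moore-determinant argument then shows that
   the h twisted rows are independent on that space, i.e. the columns in S are independent. *)

section \<open>Finite fields and Frobenius powers\<close>

definition pow_fixed :: "nat \<Rightarrow> 'a::monoid_mult set" where
  "pow_fixed q = {x. x ^ q = x}"

lemma prime_CHAR_finite: "prime CHAR('a::{field,finite})"
  by (intro prime_CHAR_semidom finite_imp_CHAR_pos) simp

lemma CHAR_power_gt_0: "0 < CHAR('a::{field,finite}) ^ e"
  using prime_CHAR_finite[where ?'a = 'a] by (simp add: prime_gt_0_nat)

lemma of_nat_card_eq_0: "of_nat (card (UNIV :: 'a::{field,finite} set)) = (0 :: 'a)"
proof -
  have "(\<Sum>x\<in>UNIV. x + 1) = (\<Sum>x\<in>UNIV. x :: 'a)"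
    by (rule sum.reindex_bij_witness[of _ "\<lambda>x. x - 1" "\<lambda>x. x + 1"]) auto
  then show ?thesis by (simp add: sum.distrib)
qed

lemma CHAR_eq_prime_of_card:
  assumes "prime p" and "card (UNIV :: 'a::{field,finite} set) = p ^ n"
  shows "CHAR('a) = p"
proof -
  have "CHAR('a) dvd card (UNIV :: 'a set)"
    using of_nat_card_eq_0[where ?'a = 'a] by (simp add: of_nat_eq_0_iff_char_dvd)
  then have "CHAR('a) dvd p ^ n" by (simp only: assms(2))
  then have "CHAR('a) dvd p" using prime_CHAR_finite prime_dvd_power by blast
  then show ?thesis using prime_CHAR_finite assms(1) primes_dvd_imp_eq by blast
qed

lemma frobenius_add:
  "q = CHAR('a::{field,finite}) ^ e \<Longrightarrow> (x + y :: 'a) ^ q = x ^ q + y ^ q"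
  by (rule freshmans_dream'[OF prime_CHAR_finite])

lemma frobenius_sum:
  "q = CHAR('a::{field,finite}) ^ e \<Longrightarrow> (\<Sum>j\<in>A. f j :: 'a) ^ q = (\<Sum>j\<in>A. f j ^ q)"
  by (rule freshmans_dream_sum'[OF prime_CHAR_finite])

lemma frobenius_minus:
  assumes "q = CHAR('a::{field,finite}) ^ e"
  shows "(- x :: 'a) ^ q = - (x ^ q)"
proof -
  have "q > 0" using assms CHAR_power_gt_0 by simp
  then have "x ^ q + (- x) ^ q = 0"
    by (metis frobenius_add[OF assms] add.right_inverse zero_power)
  then show ?thesis by (simp add: eq_neg_iff_add_eq_0 add.commute)
qed

lemma pow_fixed_sum:
  "q = CHAR('a::{field,finite}) ^ e \<Longrightarrow> (\<And>j. j \<in> A \<Longrightarrow> f j \<in> pow_fixed q) \<Longrightarrow>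
    (\<Sum>j\<in>A. f j :: 'a) \<in> pow_fixed q"
  by (simp add: pow_fixed_def frobenius_sum)

lemma pow_fixed_mult: "x \<in> pow_fixed q \<Longrightarrow> y \<in> pow_fixed q \<Longrightarrow> x * y \<in> pow_fixed q"
  for x y :: "'a::comm_monoid_mult"
  by (simp add: pow_fixed_def power_mult_distrib)

lemma pow_fixed_divide: "x \<in> pow_fixed q \<Longrightarrow> y \<in> pow_fixed q \<Longrightarrow> x / y \<in> pow_fixed q"
  for x y :: "'a::field"
  by (simp add: pow_fixed_def power_divide)

lemma pow_fixed_minus:
  "q = CHAR('a) ^ e \<Longrightarrow> x \<in> pow_fixed q \<Longrightarrow> - x \<in> pow_fixed q"
  for x :: "'a::{field,finite}"
  by (simp add: pow_fixed_def frobenius_minus)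

lemma pow_fixed_power: "x \<in> pow_fixed q \<Longrightarrow> x ^ n \<in> pow_fixed q"
  for x :: "'a::comm_monoid_mult"
  unfolding pow_fixed_def by (simp flip: power_mult add: mult.commute[of n] power_mult[of x q])

lemma pow_fixed_subset_power: "pow_fixed q \<subseteq> pow_fixed (q ^ m)"
  for q :: nat
proof
  fix x :: 'a assume "x \<in> pow_fixed q"
  then show "x \<in> pow_fixed (q ^ m)"
    by (induction m) (simp_all add: pow_fixed_def power_mult mult.commute[of q])
qed

lemma finite_field_power_card:
  fixes x :: "'a::{field,finite}"
  shows "x ^ card (UNIV :: 'a set) = x"
proof (cases "x = 0")
  case False
  let ?U = "UNIV - {0 :: 'a}"
  have "(\<Prod>y\<in>?U. x * y) = (\<Prod>y\<in>?U. y)"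
    using False by (intro prod.reindex_bij_witness[of _ "\<lambda>y. y / x" "\<lambda>y. x * y"]) auto
  moreover have "(\<Prod>y\<in>?U. x * y) = x ^ card ?U * (\<Prod>y\<in>?U. y)"
    by (simp add: prod.distrib)
  moreover have "(\<Prod>y\<in>?U. y) \<noteq> 0" by simp
  ultimately have "x ^ card ?U = 1" by simp
  moreover have "card (UNIV :: 'a set) = Suc (card ?U)"
    using finite_UNIV_card_ge_0[where ?'a = 'a] by (simp add: card_Diff_singleton)
  ultimately show ?thesis by (metis power_Suc mult.right_neutral)
qed (simp add: zero_power finite_UNIV_card_ge_0)

lemma card_pow_fixed_le:
  assumes "Q \<ge> 2"
  shows "card (pow_fixed Q :: 'a::{field,finite} set) \<le> Q"
proof -
  define p :: "'a poly" where "p = monom 1 Q - [:0, 1:]"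
  have "coeff p Q = 1" using assms by (simp add: p_def coeff_pCons split: nat.split)
  then have "p \<noteq> 0" by auto
  moreover have "degree p \<le> Q"
    unfolding p_def by (rule degree_diff_le) (use assms in \<open>auto simp: degree_monom_le\<close>)
  moreover have "pow_fixed Q = {x. poly p x = 0}"
    by (simp add: pow_fixed_def p_def poly_monom)
  ultimately show ?thesis using card_poly_roots_bound[of p] by simp
qed

lemma nat_geometric_sum:
  fixes Q t :: nat
  assumes "0 < Q"
  shows "(Q - 1) * (\<Sum>i<t. Q ^ i) = Q ^ t - 1"
proof -
  have "1 \<le> Q ^ t" using assms by simp
  have "int ((Q - 1) * (\<Sum>i<t. Q ^ i)) = (int Q - 1) * (\<Sum>i<t. int Q ^ i)"
    using assms by (simp add: of_nat_diff)
  also have "\<dots> = int Q ^ t - 1" by (rule power_diff_1_eq[symmetric])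
  also have "\<dots> = int (Q ^ t - 1)" using \<open>1 \<le> Q ^ t\<close> by (simp add: of_nat_diff)
  finally show ?thesis by (rule of_nat_eq_iff[THEN iffD1])
qed

text \<open>Every \<open>x\<close> with \<open>x^Q \<noteq> x\<close> is a root of \<open>1 + y + \<dots> + y^(n-1)\<close> at
  \<open>y = x^(Q-1)\<close>, a polynomial of degree \<open>(Q - 1) (n - 1) = |F| - Q\<close> in \<open>x\<close>.\<close>

lemma pow_nonfixed_geometric_sum:
  fixes x :: "'a::{field,finite}"
  assumes "card (UNIV :: 'a set) = Suc ((Q - 1) * n)" "0 < Q" "x \<notin> pow_fixed Q"
  shows "(\<Sum>i<n. (x ^ (Q - 1)) ^ i) = 0"
proof -
  define y where "y = x ^ (Q - 1)"
  have xQ: "x ^ Q = x * y" using \<open>0 < Q\<close> by (simp add: y_def flip: power_Suc)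
  have "x * y ^ n = x ^ card (UNIV :: 'a set)" by (simp add: y_def assms(1) power_mult)
  then have "x * (y ^ n - 1) = 0" by (simp add: finite_field_power_card algebra_simps)
  then have "(x ^ Q - x) * (\<Sum>i<n. y ^ i) = 0"
    by (simp add: xQ power_diff_1_eq flip: right_diff_distrib' mult.assoc)
  moreover have "x ^ Q - x \<noteq> 0" using assms(3) by (simp add: pow_fixed_def)
  ultimately show ?thesis by (simp add: y_def)
qed

lemma card_pow_fixed_ge:
  assumes card: "card (UNIV :: 'a::{field,finite} set) = Q ^ t" and "t \<ge> 1" and "Q \<ge> 2"
  shows "card (pow_fixed Q :: 'a set) \<ge> Q"
proof -
  define n where "n = (\<Sum>i<t. Q ^ i)"
  have nQ: "(Q - 1) * n = Q ^ t - 1" using nat_geometric_sum[of Q t] assms by (simp add: n_def)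
  have QtQ: "Q ^ t \<ge> Q" using power_increasing[of 1 t Q] assms by simp
  have "n \<ge> 1" unfolding n_def using member_le_sum[of 0 "{..<t}" "\<lambda>i. Q ^ i"] assms by simp
  define G :: "'a poly" where "G = (\<Sum>i<n. monom 1 ((Q - 1) * i))"
  have poly_G: "poly G x = (\<Sum>i<n. (x ^ (Q - 1)) ^ i)" for x
    by (simp add: G_def poly_sum poly_monom power_mult)
  have "poly G 0 = 1"
    using \<open>n \<ge> 1\<close> \<open>Q \<ge> 2\<close> by (simp add: poly_G zero_power power_0_left sum.If_cases)
  then have "G \<noteq> 0" by auto
  have "degree G \<le> (Q - 1) * (n - 1)"
    unfolding G_def
    by (intro degree_sum_le order.trans[OF degree_monom_le] mult_le_mono2) auto
  also have "\<dots> = Q ^ t - Q" using nQ QtQ \<open>n \<ge> 1\<close> \<open>Q \<ge> 2\<close> by (simp add: diff_mult_distrib2)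
  finally have "degree G \<le> Q ^ t - Q" .
  have "UNIV - pow_fixed Q \<subseteq> {x::'a. poly G x = 0}"
    using pow_nonfixed_geometric_sum[of Q n] nQ card QtQ assms by (auto simp: poly_G)
  then have "card (UNIV - pow_fixed Q :: 'a set) \<le> card {x::'a. poly G x = 0}"
    by (rule card_mono[rotated]) (rule poly_roots_finite[OF \<open>G \<noteq> 0\<close>])
  also have "\<dots> \<le> Q ^ t - Q" using card_poly_roots_bound[OF \<open>G \<noteq> 0\<close>] \<open>degree G \<le> Q ^ t - Q\<close> by simp
  finally have "card (UNIV :: 'a set) - card (pow_fixed Q :: 'a set) \<le> Q ^ t - Q"
    by (simp add: card_Diff_subset)
  then show ?thesis using card QtQ by linarith
qed

lemma card_pow_fixed:
  assumes "card (UNIV :: 'a::{field,finite} set) = Q ^ t" "t \<ge> 1" "Q \<ge> 2"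
  shows "card (pow_fixed Q :: 'a set) = Q"
  using card_pow_fixed_le[OF assms(3), where ?'a = 'a] card_pow_fixed_ge[OF assms] by simp

section \<open>Linear algebra over finite fields\<close>

definition supported_on :: "'b set \<Rightarrow> ('b \<Rightarrow> 'a::zero) set" where
  "supported_on T = {x. \<forall>j. j \<notin> T \<longrightarrow> x j = 0}"

lemma card_supported_on:
  assumes "finite T"
  shows "card (supported_on T :: ('b \<Rightarrow> 'a::{zero,finite}) set) = card (UNIV :: 'a set) ^ card T"
proof -
  have "bij_betw (\<lambda>x. restrict x T) (supported_on T) (T \<rightarrow>\<^sub>E (UNIV :: 'a set))"
    by (rule bij_betw_byWitness[where f' = "\<lambda>y j. if j \<in> T then y j else 0"])
       (auto simp: supported_on_def fun_eq_iff PiE_def extensional_def)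
  then show ?thesis
    using assms by (simp add: bij_betw_same_card card_PiE)
qed

lemma finite_supported_on:
  "finite T \<Longrightarrow> finite (supported_on T :: ('b \<Rightarrow> 'a::{zero,finite}) set)"
  unfolding supported_on_def using finite_set_of_finite_funs[of T "UNIV :: 'a set" 0] by simp

text \<open>The sums run over the fixed column set \<open>J\<close>; \<open>T\<close> only bounds the support.\<close>

definition kernel_on ::
    "(nat \<Rightarrow> nat \<Rightarrow> 'a::comm_ring) \<Rightarrow> nat \<Rightarrow> nat set \<Rightarrow> nat set \<Rightarrow> (nat \<Rightarrow> 'a) set" where
  "kernel_on B R J T = {x \<in> supported_on T. \<forall>i<R. (\<Sum>j\<in>J. x j * B i j) = 0}"

lemma kernel_on_zero: "(\<lambda>_. 0) \<in> kernel_on B R J T"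
  by (simp add: kernel_on_def supported_on_def)

lemma kernel_on_add:
  "x \<in> kernel_on B R J T \<Longrightarrow> y \<in> kernel_on B R J T \<Longrightarrow> (\<lambda>j. x j + y j) \<in> kernel_on B R J T"
  by (simp add: kernel_on_def supported_on_def distrib_right sum.distrib)

lemma kernel_on_diff:
  "x \<in> kernel_on B R J T \<Longrightarrow> y \<in> kernel_on B R J T \<Longrightarrow> (\<lambda>j. x j - y j) \<in> kernel_on B R J T"
  by (simp add: kernel_on_def supported_on_def left_diff_distrib sum_subtractf)

lemma kernel_on_scale:
  "x \<in> kernel_on B R J T \<Longrightarrow> (\<lambda>j. c * x j) \<in> kernel_on B R J T"
  by (simp add: kernel_on_def supported_on_def mult.assoc flip: sum_distrib_left)

lemma kernel_on_mono: "T' \<subseteq> T \<Longrightarrow> kernel_on B R J T' \<subseteq> kernel_on B R J T"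
  by (auto simp: kernel_on_def supported_on_def)

lemma finite_kernel_on:
  "finite T \<Longrightarrow> finite (kernel_on B R J T :: (nat \<Rightarrow> 'a::{comm_ring,finite}) set)"
  by (rule finite_subset[OF _ finite_supported_on]) (auto simp: kernel_on_def)

lemma card_kernel_on_remove:
  fixes B :: "nat \<Rightarrow> nat \<Rightarrow> 'a::{field,finite}"
  assumes "finite T" and y: "y \<in> kernel_on B R J T" "y j0 = 1"
  shows "card (UNIV :: 'a set) * card (kernel_on B R J (T - {j0})) \<le> card (kernel_on B R J T)"
proof -
  let ?K' = "kernel_on B R J (T - {j0})"
  define \<phi> where "\<phi> = (\<lambda>(t, z) j. z j + t * y j)"
  have "inj_on \<phi> (UNIV \<times> ?K')"
  proof (rule inj_onI, clarify)
    fix t z t' z' assume z: "z \<in> ?K'" "z' \<in> ?K'" and eq: "\<phi> (t, z) = \<phi> (t', z')"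
    have "z j0 = 0" "z' j0 = 0" using z by (auto simp: kernel_on_def supported_on_def)
    then have "t = t'" using fun_cong[OF eq, of j0] y by (simp add: \<phi>_def)
    with eq show "t = t' \<and> z = z'" by (auto simp: \<phi>_def fun_eq_iff)
  qed
  moreover have "\<phi> (t, z) \<in> kernel_on B R J T" if "z \<in> ?K'" for t z
    using kernel_on_add[OF subsetD[OF kernel_on_mono that] kernel_on_scale[OF y(1)]]
    by (simp add: \<phi>_def)
  then have "\<phi> ` (UNIV \<times> ?K') \<subseteq> kernel_on B R J T" by auto
  ultimately have "card ((UNIV :: 'a set) \<times> ?K') \<le> card (kernel_on B R J T)"
    by (rule card_inj_on_le[where f = \<phi>]) (simp_all add: finite_kernel_on \<open>finite T\<close>)
  then show ?thesis by (simp add: card_cartesian_product)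
qed

lemma square_system_solvable:
  fixes M :: "nat \<Rightarrow> nat \<Rightarrow> 'a::{field,finite}"
  assumes "finite R" "finite T" "card R = card T"
    and indep: "\<forall>x. (\<forall>i\<in>R. (\<Sum>j\<in>T. x j * M i j) = 0) \<longrightarrow> (\<forall>j\<in>T. x j = 0)"
  shows "\<exists>x. \<forall>i\<in>R. (\<Sum>j\<in>T. x j * M i j) = y i"
proof -
  define f where "f x i = (if i \<in> R then \<Sum>j\<in>T. x j * M i j else 0)" for x i
  have "inj_on f (supported_on T)"
  proof (rule inj_onI)
    fix x x' assume "x \<in> supported_on T" "x' \<in> supported_on T" "f x = f x'"
    then have "(\<Sum>j\<in>T. x j * M i j) = (\<Sum>j\<in>T. x' j * M i j)" if "i \<in> R" for i
      using that by (metis \<open>f x = f x'\<close> f_def)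
    then have "\<forall>i\<in>R. (\<Sum>j\<in>T. (x j - x' j) * M i j) = 0"
      by (simp add: left_diff_distrib sum_subtractf)
    then have "\<forall>j\<in>T. x j - x' j = 0" using indep[rule_format, of "\<lambda>j. x j - x' j"] by blast
    with \<open>x \<in> supported_on T\<close> \<open>x' \<in> supported_on T\<close> show "x = x'"
      by (auto simp: supported_on_def fun_eq_iff)
  qed
  moreover have "f ` supported_on T \<subseteq> supported_on R" by (auto simp: supported_on_def f_def)
  ultimately have "f ` supported_on T = supported_on R"
    using assms(1-3)
    by (intro card_subset_eq finite_supported_on) (simp_all add: card_image card_supported_on)
  moreover have "(\<lambda>i. if i \<in> R then y i else 0) \<in> supported_on R" by (simp add: supported_on_def)
  ultimately obtain x where x: "(\<lambda>i. if i \<in> R then y i else 0) = f x" by auto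
  have "(\<Sum>j\<in>T. x j * M i j) = y i" if "i \<in> R" for i
    using fun_cong[OF x, of i] that by (simp add: f_def)
  then show ?thesis by blast
qed

lemma square_system_rows_indep:
  fixes M :: "nat \<Rightarrow> nat \<Rightarrow> 'a::{field,finite}"
  assumes "finite R" "finite T" "card R = card T"
    and indep: "\<forall>x. (\<forall>i\<in>R. (\<Sum>j\<in>T. x j * M i j) = 0) \<longrightarrow> (\<forall>j\<in>T. x j = 0)"
    and c: "\<forall>j\<in>T. (\<Sum>i\<in>R. c i * M i j) = 0"
  shows "\<forall>i\<in>R. c i = 0"
proof
  fix i0 assume "i0 \<in> R"
  obtain x where x: "\<forall>i\<in>R. (\<Sum>j\<in>T. x j * M i j) = (if i = i0 then 1 else 0)"
    using square_system_solvable[OF assms(1-4), of "\<lambda>i. if i = i0 then 1 else 0"] by blast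
  have "c i0 = (\<Sum>i\<in>R. if i = i0 then c i else 0)"
    using \<open>i0 \<in> R\<close> \<open>finite R\<close> by simp
  also have "\<dots> = (\<Sum>i\<in>R. c i * (\<Sum>j\<in>T. x j * M i j))"
    using x by (intro sum.cong) auto
  also have "\<dots> = (\<Sum>j\<in>T. x j * (\<Sum>i\<in>R. c i * M i j))"
    by (simp add: sum_distrib_left sum.swap[of _ R] mult_ac)
  also have "\<dots> = 0" using c by simp
  finally show "c i0 = 0" .
qed

definition lin_indep_over :: "'a::field set \<Rightarrow> nat \<Rightarrow> (nat \<Rightarrow> 'a) \<Rightarrow> bool" where
  "lin_indep_over E k w \<longleftrightarrow> (\<forall>c. (\<forall>t<k. c t \<in> E) \<and> (\<Sum>t<k. c t * w t) = 0 \<longrightarrow> (\<forall>t<k. c t = 0))"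

text \<open>Greedy choice: the span of \<open>k\<close> vectors has at most \<open>|E|^k\<close> elements, so while this is
  smaller than \<open>|Z|\<close> some element of \<open>Z\<close> lies outside it.\<close>

lemma exists_lin_indep_over:
  fixes E Z :: "'a::{field,finite} set"
  assumes div: "\<And>x y. x \<in> E \<Longrightarrow> y \<in> E \<Longrightarrow> x / y \<in> E"
    and minus: "\<And>x. x \<in> E \<Longrightarrow> - x \<in> E"
    and "\<forall>k'<k. card E ^ k' < card Z"
  shows "\<exists>w. (\<forall>t<k. w t \<in> Z) \<and> lin_indep_over E k w"
  using assms(3)
proof (induction k)
  case 0
  then show ?case by (simp add: lin_indep_over_def)
next
  case (Suc k)
  then obtain w where wZ: "\<forall>t<k. w t \<in> Z" and w: "lin_indep_over E k w" by auto
  define span where "span = (\<lambda>c. \<Sum>t<k. c t * w t) ` ({..<k} \<rightarrow>\<^sub>E E)"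
  have "card span \<le> card E ^ k"
    unfolding span_def by (rule order.trans[OF card_image_le]) (simp_all add: card_PiE finite_PiE)
  then have "\<not> Z \<subseteq> span"
    using Suc.prems card_mono[of span Z] by (meson finite leD lessI order.strict_trans2)
  then obtain z where z: "z \<in> Z" "z \<notin> span" by auto
  have "lin_indep_over E (Suc k) (w(k := z))"
    unfolding lin_indep_over_def
  proof (rule allI, rule impI)
    fix c assume c: "(\<forall>t<Suc k. c t \<in> E) \<and> (\<Sum>t<Suc k. c t * (w(k := z)) t) = 0"
    then have sum: "(\<Sum>t<k. c t * w t) + c k * z = 0" by simp
    have ck: "c k = 0"
    proof (rule ccontr)
      assume ck: "c k \<noteq> 0"
      have "(\<Sum>t<k. restrict (\<lambda>t. - c t / c k) {..<k} t * w t) = z"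
      proof -
        have "c k * z = - (\<Sum>t<k. c t * w t)"
          using sum by (simp add: eq_neg_iff_add_eq_0 add.commute)
        then have "z = - (\<Sum>t<k. c t * w t) / c k" using ck by (simp add: field_simps)
        then show ?thesis by (simp add: sum_divide_distrib sum_negf)
      qed
      moreover have "restrict (\<lambda>t. - c t / c k) {..<k} \<in> {..<k} \<rightarrow>\<^sub>E E"
        using c div minus by auto
      ultimately have "z \<in> span" unfolding span_def by (rule image_eqI[OF sym])
      then show False using z by simp
    qed
    with sum have "(\<Sum>t<k. c t * w t) = 0" by simp
    then have "\<forall>t<k. c t = 0" using w c unfolding lin_indep_over_def by simp
    with ck show "\<forall>t<Suc k. c t = 0" by (simp add: less_Suc_eq)
  qed
  moreover have "\<forall>t<Suc k. (w(k := z)) t \<in> Z" using wZ z by (simp add: less_Suc_eq)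
  ultimately show ?case by blast
qed

lemma vandermonde_indep:
  fixes \<alpha> :: "nat \<Rightarrow> 'a::field"
  assumes "finite T" and inj: "inj_on \<alpha> T" and "card T \<le> k"
    and eq: "\<forall>t<k. (\<Sum>j\<in>T. c j * \<alpha> j ^ t) = 0"
  shows "\<forall>j\<in>T. c j = 0"
proof
  fix j0 assume j0: "j0 \<in> T"
  define p where "p = (\<Prod>j\<in>T - {j0}. [:- \<alpha> j, 1:])"
  have "degree p \<le> card (T - {j0})"
    unfolding p_def using degree_prod_sum_le[of "T - {j0}" "\<lambda>j. [:- \<alpha> j, 1:]"] \<open>finite T\<close>
    by simp
  also have "\<dots> < k" using \<open>finite T\<close> j0 \<open>card T \<le> k\<close> card_Diff1_less by fastforce
  finally have "degree p < k" .
  have poly_p: "poly p x = (\<Sum>t<k. coeff p t * x ^ t)" for x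
  proof -
    have "poly p x = (\<Sum>t\<le>degree p. coeff p t * x ^ t)" by (rule poly_altdef)
    also have "\<dots> = (\<Sum>t<k. coeff p t * x ^ t)"
      by (rule sum.mono_neutral_left) (use \<open>degree p < k\<close> in \<open>auto simp: coeff_eq_0\<close>)
    finally show ?thesis .
  qed
  have "(\<Sum>j\<in>T. c j * poly p (\<alpha> j)) = (\<Sum>t<k. coeff p t * (\<Sum>j\<in>T. c j * \<alpha> j ^ t))"
    by (simp add: poly_p sum_distrib_left sum.swap[of _ T] mult_ac)
  also have "\<dots> = 0" using eq by simp
  finally have "(\<Sum>j\<in>T. c j * poly p (\<alpha> j)) = 0" .
  moreover have "(\<Sum>j\<in>T. c j * poly p (\<alpha> j)) = (\<Sum>j\<in>{j0}. c j * poly p (\<alpha> j))"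
    by (rule sum.mono_neutral_right) (use \<open>finite T\<close> j0 in \<open>auto simp: p_def poly_prod\<close>)
  moreover have "poly p (\<alpha> j0) \<noteq> 0"
    using \<open>finite T\<close> j0 inj by (auto simp: p_def poly_prod inj_on_def)
  ultimately show "c j0 = 0" by simp
qed

text \<open>Coordinates of a point of the projective line on the rational normal curve in
  \<open>P^(k-1)\<close>: \<open>(1, x, \<dots>, x^(k-1))\<close> for \<open>Some x\<close> and \<open>(0, \<dots>, 0, 1)\<close> for the point at infinity
  \<open>None\<close>.\<close>

definition proj_vandermonde :: "nat \<Rightarrow> 'a::field option \<Rightarrow> nat \<Rightarrow> 'a" where
  "proj_vandermonde k p t = (case p of None \<Rightarrow> if t = k - 1 then 1 else 0 | Some x \<Rightarrow> x ^ t)"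

lemma proj_vandermonde_pow_fixed:
  "q > 0 \<Longrightarrow> set_option p \<subseteq> pow_fixed q \<Longrightarrow> proj_vandermonde k p t \<in> pow_fixed q"
  for p :: "'a::field option"
  using pow_fixed_power[of _ q t]
  by (cases p) (auto simp: proj_vandermonde_def pow_fixed_def zero_power)

lemma proj_vandermonde_indep_affine:
  fixes pt :: "nat \<Rightarrow> 'a::field option"
  assumes "finite T" and inj: "inj_on pt T" and affine: "\<forall>j\<in>T. pt j \<noteq> None"
    and "card T \<le> k'"
    and eq: "\<forall>t<k'. (\<Sum>j\<in>T. c j * proj_vandermonde k (pt j) t) = 0"
  shows "\<forall>j\<in>T. c j = 0"
proof (rule vandermonde_indep)
  show "inj_on (\<lambda>j. the (pt j)) T"
  proof (rule inj_onI)
    fix x y assume "x \<in> T" "y \<in> T" "the (pt x) = the (pt y)"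
    then have "pt x = pt y" using affine by (metis option.expand)
    then show "x = y" using inj \<open>x \<in> T\<close> \<open>y \<in> T\<close> by (meson inj_onD)
  qed
  have "proj_vandermonde k (pt j) t = the (pt j) ^ t" if "j \<in> T" for j t
    using affine that by (auto simp: proj_vandermonde_def)
  then show "\<forall>t<k'. (\<Sum>j\<in>T. c j * the (pt j) ^ t) = 0"
    using eq by (simp cong: sum.cong)
qed fact+

text \<open>The point at infinity only enters the last coordinate, so the first \<open>k - 1\<close>
  coordinates form an affine Vandermonde system on the remaining points.\<close>

lemma proj_vandermonde_indep:
  fixes pt :: "nat \<Rightarrow> 'a::field option"
  assumes "finite T" and inj: "inj_on pt T" and "card T \<le> k"
    and eq: "\<forall>t<k. (\<Sum>j\<in>T. c j * proj_vandermonde k (pt j) t) = 0"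
  shows "\<forall>j\<in>T. c j = 0"
proof (cases "\<exists>j\<in>T. pt j = None")
  case False
  then show ?thesis
    using proj_vandermonde_indep_affine[OF assms(1,2)] eq \<open>card T \<le> k\<close> by auto
next
  case True
  then obtain j0 where j: "j0 \<in> T" "pt j0 = None" by blast
  have T': "\<forall>j\<in>T - {j0}. pt j \<noteq> None"
    using inj j by (auto simp: inj_on_def)
  have split: "(\<Sum>j\<in>T. f j) = f j0 + (\<Sum>j\<in>T - {j0}. f j)" for f :: "nat \<Rightarrow> 'a"
    using \<open>finite T\<close> j by (simp add: sum.remove)
  have "\<forall>t<k - 1. (\<Sum>j\<in>T - {j0}. c j * proj_vandermonde k (pt j) t) = 0"
  proof (intro allI impI)
    fix t assume "t < k - 1"
    then show "(\<Sum>j\<in>T - {j0}. c j * proj_vandermonde k (pt j) t) = 0"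
      using eq[rule_format, of t] split[of "\<lambda>j. c j * proj_vandermonde k (pt j) t"] j
      by (simp add: proj_vandermonde_def)
  qed
  then have c0: "\<forall>j\<in>T - {j0}. c j = 0"
    using proj_vandermonde_indep_affine[of "T - {j0}" pt "k - 1"] inj_on_subset[OF inj] T'
      \<open>finite T\<close> \<open>card T \<le> k\<close> j by auto
  have "card T > 0" using \<open>finite T\<close> j by (auto simp: card_gt_0_iff)
  then have "k - 1 < k" using \<open>card T \<le> k\<close> by simp
  then have "c j0 = 0"
    using eq[rule_format, of "k - 1"] split[of "\<lambda>j. c j * proj_vandermonde k (pt j) (k - 1)"] c0 j
    by (simp add: proj_vandermonde_def)
  with c0 show ?thesis by blast
qed

lemma kernel_on_frobenius:
  fixes B :: "nat \<Rightarrow> nat \<Rightarrow> 'a::{field,finite}"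
  assumes q: "q = CHAR('a) ^ e" and B: "\<forall>i<R. \<forall>j\<in>J. B i j \<in> pow_fixed q"
    and x: "x \<in> kernel_on B R J T"
  shows "(\<lambda>j. x j ^ q) \<in> kernel_on B R J T"
proof -
  have "q > 0" using q CHAR_power_gt_0 by simp
  have "(\<Sum>j\<in>J. x j ^ q * B i j) = (\<Sum>j\<in>J. x j * B i j) ^ q" if "i < R" for i
    using B that by (simp add: frobenius_sum[OF q] power_mult_distrib pow_fixed_def)
  then show ?thesis
    using x \<open>q > 0\<close> by (simp add: kernel_on_def supported_on_def zero_power)
qed

definition lin_indep_on_kernel ::
    "nat \<Rightarrow> (nat \<Rightarrow> nat \<Rightarrow> 'a::field) \<Rightarrow> nat \<Rightarrow> nat set \<Rightarrow> nat set \<Rightarrow> (nat \<Rightarrow> 'a) \<Rightarrow> bool" where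
  "lin_indep_on_kernel q B R J T \<gamma> \<longleftrightarrow>
     (\<forall>c\<in>kernel_on B R J T. (\<forall>j. c j \<in> pow_fixed q) \<and> (\<Sum>j\<in>J. c j * \<gamma> j) = 0 \<longrightarrow> c = (\<lambda>_. 0))"

lemma lin_indep_on_kernel_frobenius:
  assumes q: "q = CHAR('a::{field,finite}) ^ e"
    and indep: "lin_indep_on_kernel q B R J T (\<gamma> :: nat \<Rightarrow> 'a)" and "T' \<subseteq> T"
  shows "lin_indep_on_kernel q B R J T' (\<lambda>j. \<gamma> j ^ q)"
  unfolding lin_indep_on_kernel_def
proof (intro ballI impI)
  fix c assume c: "c \<in> kernel_on B R J T'"
    and "(\<forall>j. c j \<in> pow_fixed q) \<and> (\<Sum>j\<in>J. c j * \<gamma> j ^ q) = 0"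
  then have "(\<forall>j. c j \<in> pow_fixed q) \<and> (\<Sum>j\<in>J. c j * \<gamma> j) ^ q = 0"
    by (simp add: frobenius_sum[OF q] power_mult_distrib pow_fixed_def)
  moreover have "c \<in> kernel_on B R J T" using c kernel_on_mono[OF \<open>T' \<subseteq> T\<close>] by blast
  ultimately show "c = (\<lambda>_. 0)" using indep by (simp add: lin_indep_on_kernel_def)
qed

lemma frobenius_twist_orthogonal:
  fixes y \<gamma> :: "nat \<Rightarrow> 'a::{field,finite}"
  assumes q: "q = CHAR('a) ^ e"
    and "(\<Sum>j\<in>J. y j * \<gamma> j ^ (q ^ s)) = 0" "(\<Sum>j\<in>J. y j * \<gamma> j ^ (q ^ Suc s)) = 0"
  shows "(\<Sum>j\<in>J. (y j - y j ^ q) * (\<gamma> j ^ q) ^ (q ^ s)) = 0"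
proof -
  have twist: "(\<gamma> j ^ q) ^ (q ^ s) = \<gamma> j ^ (q ^ Suc s)"
    "(\<gamma> j ^ (q ^ s)) ^ q = \<gamma> j ^ (q ^ Suc s)" for j
    by (simp only: power_mult[symmetric] power_Suc) (simp only: power_mult[symmetric] power_Suc2)
  have "(\<Sum>j\<in>J. (y j - y j ^ q) * (\<gamma> j ^ q) ^ (q ^ s))
      = (\<Sum>j\<in>J. y j * \<gamma> j ^ (q ^ Suc s)) - (\<Sum>j\<in>J. (y j * \<gamma> j ^ (q ^ s)) ^ q)"
    by (simp add: twist power_mult_distrib left_diff_distrib sum_subtractf)
  also have "\<dots> = (\<Sum>j\<in>J. y j * \<gamma> j ^ (q ^ Suc s)) - (\<Sum>j\<in>J. y j * \<gamma> j ^ (q ^ s)) ^ q"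
    by (simp add: frobenius_sum[OF q])
  also have "\<dots> = 0" using assms CHAR_power_gt_0 by (simp add: zero_power)
  finally show ?thesis .
qed

text \<open>The Moore matrix of \<open>\<gamma>\<close> has full rank on the kernel. A nonzero solution \<open>x\<close>,
  normalised to \<open>x j0 = 1\<close>, yields the solution \<open>x - x^q\<close> for \<open>\<gamma>^q\<close> with one equation fewer,
  on a kernel at least \<open>|F|\<close> times smaller; at the end \<open>x = x^q\<close>, contradicting independence.\<close>

lemma kernel_on_frobenius_orthogonal_zero:
  fixes B :: "nat \<Rightarrow> nat \<Rightarrow> 'a::{field,finite}"
  assumes q: "q = CHAR('a) ^ e" and "finite T"
    and B: "\<forall>i<R. \<forall>j\<in>J. B i j \<in> pow_fixed q"
    and indep: "lin_indep_on_kernel q B R J T \<gamma>"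
    and card: "card (kernel_on B R J T) \<le> card (UNIV :: 'a set) ^ h"
    and x: "x \<in> kernel_on B R J T"
    and orth: "\<forall>s<h. (\<Sum>j\<in>J. x j * \<gamma> j ^ (q ^ s)) = 0"
  shows "x = (\<lambda>_. 0)"
  using \<open>finite T\<close> indep card x orth
proof (induction h arbitrary: T \<gamma> x)
  case 0
  then show ?case
    using kernel_on_zero card_le_Suc0_iff_eq[OF finite_kernel_on] by (metis One_nat_def power_0)
next
  case (Suc h)
  note indep = Suc.prems(2) and card = Suc.prems(3) and x = Suc.prems(4) and orth = Suc.prems(5)
  show ?case
  proof (rule ccontr)
    assume "x \<noteq> (\<lambda>_. 0)"
    then obtain j0 where "x j0 \<noteq> 0" by auto
    define y where "y = (\<lambda>j. inverse (x j0) * x j)"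
    have y: "y \<in> kernel_on B R J T" and y1: "y j0 = 1"
      using kernel_on_scale[OF x] \<open>x j0 \<noteq> 0\<close> by (simp_all add: y_def)
    have y_orth: "(\<Sum>j\<in>J. y j * \<gamma> j ^ (q ^ s)) = 0" if "s < Suc h" for s
      using orth that by (simp add: y_def mult.assoc flip: sum_distrib_left)
    define y' where "y' = (\<lambda>j. y j - y j ^ q)"
    have "y' \<in> kernel_on B R J T"
      unfolding y'_def by (rule kernel_on_diff[OF y kernel_on_frobenius[OF q B y]])
    then have "y' \<in> kernel_on B R J (T - {j0})"
      using y1 by (auto simp: kernel_on_def supported_on_def y'_def)
    moreover have "\<forall>s<h. (\<Sum>j\<in>J. y' j * (\<gamma> j ^ q) ^ (q ^ s)) = 0"
      using frobenius_twist_orthogonal[OF q y_orth y_orth] by (simp add: y'_def)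
    moreover have "card (kernel_on B R J (T - {j0})) \<le> card (UNIV :: 'a set) ^ h"
      using order.trans[OF card_kernel_on_remove[OF \<open>finite T\<close> y y1] card]
        finite_UNIV_card_ge_0[where ?'a = 'a] by simp
    ultimately have "y' = (\<lambda>_. 0)"
      using Suc.IH[of "T - {j0}" "\<lambda>j. \<gamma> j ^ q" y'] \<open>finite T\<close>
        lin_indep_on_kernel_frobenius[OF q indep, of "T - {j0}"] by blast
    then have "\<forall>j. y j \<in> pow_fixed q" by (simp add: y'_def pow_fixed_def fun_eq_iff)
    then have "y = (\<lambda>_. 0)" using indep y y_orth[of 0] by (simp add: lin_indep_on_kernel_def)
    then show False using y1 by (simp add: fun_eq_iff)
  qed
qed

section \<open>Admissible column sets\<close>

definition mr_pattern :: "nat \<Rightarrow> nat \<Rightarrow> nat \<Rightarrow> nat \<Rightarrow> nat set \<Rightarrow> bool" where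
  "mr_pattern g r a h S \<longleftrightarrow>
     S \<subseteq> {..<g * r} \<and> card S = g * a + h \<and> (\<forall>b<g. a \<le> card (S \<inter> {b * r..<(b + 1) * r}))"

lemma Int_block_eq:
  fixes r :: nat
  assumes "0 < r"
  shows "S \<inter> {b * r..<(b + 1) * r} = {j \<in> S. j div r = b}"
proof -
  have "j \<in> {b * r..<(b + 1) * r} \<longleftrightarrow> j div r = b" for j
  proof
    assume "j \<in> {b * r..<(b + 1) * r}"
    then show "j div r = b" by (intro div_nat_eqI) (auto simp: mult.commute)
  next
    assume "j div r = b"
    then show "j \<in> {b * r..<(b + 1) * r}"
      using div_mult_mod_eq[of j r] mod_less_divisor[OF assms, of j] by auto
  qed
  then show ?thesis by blast
qed

lemma mr_pattern_blocks:
  assumes "mr_pattern g r a h S" "0 < r"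
  shows "finite S" and "\<And>j. j \<in> S \<Longrightarrow> j div r < g"
    and "\<And>b. b < g \<Longrightarrow> a \<le> card {j \<in> S. j div r = b}"
    and "(\<Sum>b<g. card {j \<in> S. j div r = b} - a) = h"
proof -
  show "finite S" using assms(1) finite_subset by (auto simp: mr_pattern_def)
  show div: "j div r < g" if "j \<in> S" for j
    using assms that by (auto simp: mr_pattern_def less_mult_imp_div_less)
  show blk: "a \<le> card {j \<in> S. j div r = b}" if "b < g" for b
    using assms that Int_block_eq[OF assms(2)] by (simp add: mr_pattern_def)
  have "(\<Sum>b<g. \<Sum>j\<in>{j \<in> S. j div r = b}. 1) = (\<Sum>j\<in>S. 1::nat)"
    using \<open>finite S\<close> div by (intro sum.group) auto
  then have "(\<Sum>b<g. card {j \<in> S. j div r = b}) = card S" by simp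
  moreover have "(\<Sum>b<g. card {j \<in> S. j div r = b} - a)
      = (\<Sum>b<g. card {j \<in> S. j div r = b}) - (\<Sum>b<g. a)"
    by (rule sum_subtractf_nat) (use blk in auto)
  ultimately show "(\<Sum>b<g. card {j \<in> S. j div r = b} - a) = h"
    using assms(1) by (simp add: mr_pattern_def)
qed

lemma mr_pattern_block_card_le:
  assumes "mr_pattern g r a h S" "0 < r" "b < g"
  shows "card {j \<in> S. j div r = b} \<le> min r (a + h)"
proof -
  note blocks = mr_pattern_blocks[OF assms(1,2)]
  have "card {j \<in> S. j div r = b} - a \<le> (\<Sum>b<g. card {j \<in> S. j div r = b} - a)"
    using assms(3) by (intro member_le_sum) auto
  then have "card {j \<in> S. j div r = b} \<le> a + h" using blocks(4) by simp
  moreover have "card {j \<in> S. j div r = b} \<le> card {b * r..<(b + 1) * r}"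
    using Int_block_eq[OF assms(2), of S b] by (intro card_mono) auto
  ultimately show ?thesis by simp
qed

lemma mr_pattern_heavy_blocks:
  assumes "mr_pattern g r a h S" "0 < r"
  shows "card {b \<in> {..<g}. a < card {j \<in> S. j div r = b}} \<le> min h g"
proof -
  let ?I = "{b \<in> {..<g}. a < card {j \<in> S. j div r = b}}"
  have "card ?I = (\<Sum>b\<in>?I. 1)" by simp
  also have "\<dots> \<le> (\<Sum>b\<in>?I. card {j \<in> S. j div r = b} - a)" by (rule sum_mono) auto
  also have "\<dots> \<le> (\<Sum>b<g. card {j \<in> S. j div r = b} - a)" by (rule sum_mono2) auto
  finally have "card ?I \<le> h" using mr_pattern_blocks(4)[OF assms] by simp
  moreover have "card ?I \<le> g" using card_mono[of "{..<g}" ?I] by auto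
  ultimately show ?thesis by simp
qed

lemma mr_pattern_split:
  assumes S: "mr_pattern g r a h S" and "0 < r"
  obtains P where "P \<subseteq> S" "card (S - P) = h" "\<And>b. card {j \<in> P. j div r = b} \<le> a"
proof -
  note blocks = mr_pattern_blocks[OF assms]
  have "\<forall>b\<in>{..<g}. \<exists>T. T \<subseteq> {j \<in> S. j div r = b} \<and> card T = a"
    using blocks(3) by (auto intro: obtain_subset_with_card_n)
  then obtain P where P: "\<And>b. b < g \<Longrightarrow> P b \<subseteq> {j \<in> S. j div r = b} \<and> card (P b) = a"
    by (metis (no_types) bchoice lessThan_iff)
  define P' where "P' = (\<Union>b<g. P b)"
  have fin: "finite (P b)" if "b < g" for b
    using P[OF that] blocks(1) finite_subset by fastforce
  have P'_block: "{j \<in> P'. j div r = b} = (if b < g then P b else {})" for b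
    using P by (auto simp: P'_def)
  have "card P' = (\<Sum>b<g. card (P b))"
    unfolding P'_def using P fin by (intro card_UN_disjoint) auto
  then have "card P' = g * a" using P by simp
  moreover have "P' \<subseteq> S" using P by (auto simp: P'_def)
  ultimately have "card (S - P') = h"
    using S blocks(1) by (simp add: card_Diff_subset finite_subset mr_pattern_def)
  moreover have "card {j \<in> P'. j div r = b} \<le> a" for b
    using P by (simp add: P'_block)
  ultimately show ?thesis using that \<open>P' \<subseteq> S\<close> by blast
qed

lemma exists_mr_pattern:
  assumes "a \<le> r" "g * a + h \<le> g * r"
  shows "\<exists>S. mr_pattern g r a h S"
proof -
  define A where "A = (\<Union>b<g. {b * r..<b * r + a})"
  have block: "{b * r..<b * r + a} \<subseteq> {b * r..<(b + 1) * r}" for b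
    using assms(1) by auto
  have "j div r = b" if "j \<in> {b * r..<b * r + a}" for j b
    using that assms(1) by (intro div_nat_eqI) (auto simp: mult.commute)
  then have "card A = (\<Sum>b<g. card {b * r..<b * r + a})"
    unfolding A_def by (intro card_UN_disjoint) blast+
  then have cardA: "card A = g * a" by simp
  have A_sub: "A \<subseteq> {..<g * r}"
  proof
    fix j assume "j \<in> A"
    then obtain b where "b < g" "j < b * r + a" by (auto simp: A_def)
    then have "j < (b + 1) * r" using assms(1) by simp
    also have "\<dots> \<le> g * r" using \<open>b < g\<close> by (intro mult_le_mono1) simp
    finally show "j \<in> {..<g * r}" by simp
  qed
  have "h \<le> card ({..<g * r} - A)"
    using assms A_sub cardA by (simp add: card_Diff_subset finite_subset)
  then obtain E where E: "E \<subseteq> {..<g * r} - A" "card E = h"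
    by (meson obtain_subset_with_card_n)
  have "finite E" using E(1) by (rule finite_subset) simp
  have "finite A" using A_sub by (rule finite_subset) simp
  have "mr_pattern g r a h (A \<union> E)"
    unfolding mr_pattern_def
  proof (intro conjI allI impI)
    show "A \<union> E \<subseteq> {..<g * r}" using A_sub E by auto
    show "card (A \<union> E) = g * a + h"
      using E cardA card_Un_disjoint[OF \<open>finite A\<close> \<open>finite E\<close>] by auto
    fix b assume "b < g"
    then have "{b * r..<b * r + a} \<subseteq> (A \<union> E) \<inter> {b * r..<(b + 1) * r}"
      using block by (auto simp: A_def)
    then have "card {b * r..<b * r + a} \<le> card ((A \<union> E) \<inter> {b * r..<(b + 1) * r})"
      by (rule card_mono[rotated]) simp
    then show "a \<le> card ((A \<union> E) \<inter> {b * r..<(b + 1) * r})" by simp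
  qed
  then show ?thesis by blast
qed

section \<open>Projective Reed-Solomon codes\<close>

lemma proj_vandermonde_rows_indep:
  fixes pt :: "nat \<Rightarrow> 'a::{field,finite} option"
  assumes "finite T" "inj_on pt T" "card T = a"
    and "\<forall>j\<in>T. (\<Sum>i<a. c i * proj_vandermonde a (pt j) i) = 0"
  shows "\<forall>i<a. c i = 0"
proof -
  have "\<forall>x. (\<forall>i\<in>{..<a}. (\<Sum>j\<in>T. x j * proj_vandermonde a (pt j) i) = 0) \<longrightarrow> (\<forall>j\<in>T. x j = 0)"
    using proj_vandermonde_indep[OF assms(1,2), of a] assms(3) by auto
  then show ?thesis
    using square_system_rows_indep[of "{..<a}" T "\<lambda>i j. proj_vandermonde a (pt j) i" c] assms
    by simp
qed

lemma mds_generator_cong: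
  assumes "\<forall>i<a. \<forall>j<r. A' i j = A i j"
  shows "mds_generator A' a r = mds_generator A a r"
proof -
  have "(\<Sum>i<a. c i * A' i j) = (\<Sum>i<a. c i * A i j)" if "j < r" for c j
    using assms that by simp
  then have "(\<forall>j<r. (\<Sum>i<a. c i * A' i j) = 0) = (\<forall>j<r. (\<Sum>i<a. c i * A i j) = 0)"
    and "{j. j < r \<and> (\<Sum>i<a. c i * A' i j) \<noteq> 0} = {j. j < r \<and> (\<Sum>i<a. c i * A i j) \<noteq> 0}" for c
    by auto
  then show ?thesis unfolding mds_generator_def by presburger
qed

lemma proj_vandermonde_zeros_less:
  fixes pt :: "nat \<Rightarrow> 'a::{field,finite} option"
  assumes inj: "inj_on pt {..<r}" and "\<exists>i<a. c i \<noteq> 0"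
  shows "card {j. j < r \<and> (\<Sum>i<a. c i * proj_vandermonde a (pt j) i) = 0} < a"
proof (rule ccontr)
  let ?Z = "{j. j < r \<and> (\<Sum>i<a. c i * proj_vandermonde a (pt j) i) = 0}"
  assume "\<not> card ?Z < a"
  then obtain T where T: "T \<subseteq> ?Z" "card T = a" by (meson not_less obtain_subset_with_card_n)
  have "T \<subseteq> {..<r}" "\<forall>j\<in>T. (\<Sum>i<a. c i * proj_vandermonde a (pt j) i) = 0" using T(1) by auto
  then have "\<forall>i<a. c i = 0"
    using proj_vandermonde_rows_indep[OF finite_subset[OF _ finite_lessThan] inj_on_subset[OF inj]]
      T(2)
    by blast
  then show False using assms(2) by blast
qed

lemma proj_vandermonde_interpolation:
  fixes pt :: "nat \<Rightarrow> 'a::{field,finite} option"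
  assumes inj: "inj_on pt {..<r}" and T: "T \<subseteq> {..<r}" "Suc (card T) = a" and j1: "j1 < r" "j1 \<notin> T"
  shows "\<exists>c. (\<Sum>i<a. c i * proj_vandermonde a (pt j1) i) = 1
    \<and> (\<forall>j\<in>T. (\<Sum>i<a. c i * proj_vandermonde a (pt j) i) = 0)"
proof -
  have T1: "insert j1 T \<subseteq> {..<r}" "finite (insert j1 T)" "card (insert j1 T) = card {..<a}"
    using T j1 finite_subset[OF T(1)] by auto
  have "\<forall>x. (\<forall>j\<in>insert j1 T. (\<Sum>i\<in>{..<a}. x i * proj_vandermonde a (pt j) i) = 0)
      \<longrightarrow> (\<forall>i\<in>{..<a}. x i = 0)"
    using proj_vandermonde_rows_indep[OF T1(2) inj_on_subset[OF inj T1(1)]] T1(3) by simp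
  then obtain c where "\<forall>j\<in>insert j1 T. (\<Sum>i\<in>{..<a}. c i * proj_vandermonde a (pt j) i)
      = (if j = j1 then 1 else 0)"
    using square_system_solvable[where M = "\<lambda>j i. proj_vandermonde a (pt j) i"
        and y = "\<lambda>j. if j = j1 then 1 else 0", OF T1(2) finite_lessThan T1(3)] by blast
  then show ?thesis using j1(2) by auto
qed

lemma mds_generator_proj_vandermonde:
  fixes pt :: "nat \<Rightarrow> 'a::{field,finite} option"
  assumes inj: "inj_on pt {..<r}" and "0 < a" "a \<le> r"
  shows "mds_generator (\<lambda>i j. proj_vandermonde a (pt j) i) a r"
proof -
  let ?cw = "\<lambda>c j. \<Sum>i<a. c i * proj_vandermonde a (pt j) i"
  let ?weights = "{card {j. j < r \<and> ?cw c j \<noteq> 0} | c. \<exists>i<a. c i \<noteq> 0}"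
  have weight: "card {j. j < r \<and> ?cw c j \<noteq> 0} = r - card {j. j < r \<and> ?cw c j = 0}" for c
  proof -
    have "{j. j < r \<and> ?cw c j \<noteq> 0} = {..<r} - {j. j < r \<and> ?cw c j = 0}" by auto
    then show ?thesis by (simp add: card_Diff_subset subset_eq)
  qed
  have "a - 1 \<le> card {..<r}" using \<open>a \<le> r\<close> by simp
  then obtain T where T: "T \<subseteq> {..<r}" "card T = a - 1" by (meson obtain_subset_with_card_n)
  then have "T \<noteq> {..<r}" using \<open>0 < a\<close> \<open>a \<le> r\<close> by auto
  then obtain j1 where j1: "j1 < r" "j1 \<notin> T" using T(1) by auto
  obtain c where c: "?cw c j1 = 1" "\<forall>j\<in>T. ?cw c j = 0"
    using proj_vandermonde_interpolation[OF inj T(1) _ j1] T(2) \<open>0 < a\<close> by auto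
  have c_nz: "\<exists>i<a. c i \<noteq> 0"
  proof (rule ccontr)
    assume "\<not> (\<exists>i<a. c i \<noteq> 0)"
    then have "?cw c j1 = 0" by simp
    then show False using c(1) by simp
  qed
  have "T \<subseteq> {j. j < r \<and> ?cw c j = 0}" using c T by auto
  then have "a - 1 \<le> card {j. j < r \<and> ?cw c j = 0}" using card_mono[of _ T] T(2) by simp
  then have "card {j. j < r \<and> ?cw c j \<noteq> 0} = r - a + 1"
    using proj_vandermonde_zeros_less[OF inj c_nz] weight[of c] \<open>a \<le> r\<close> by simp
  then have "r - a + 1 \<in> ?weights" using c_nz by (intro CollectI exI[of _ c]) simp
  moreover have "r - a + 1 \<le> w" if "w \<in> ?weights" for w
  proof -
    from that obtain c where "w = card {j. j < r \<and> ?cw c j \<noteq> 0}" "\<exists>i<a. c i \<noteq> 0" by blast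
    then show ?thesis using proj_vandermonde_zeros_less[OF inj, of a c] weight[of c] \<open>a \<le> r\<close> by simp
  qed
  moreover have "finite ?weights" by (rule finite_subset[of _ "{..r}"]) (auto simp: weight)
  ultimately have "Min ?weights = r - a + 1" by (intro Min_eqI)
  moreover have "\<forall>i<a. c i = 0" if "\<forall>j<r. ?cw c j = 0" for c
  proof -
    have T1: "insert j1 T \<subseteq> {..<r}" "card (insert j1 T) = a"
      using T j1 \<open>0 < a\<close> finite_subset[OF T(1)] by auto
    then show ?thesis
      using proj_vandermonde_rows_indep[OF finite_subset[OF T1(1)] inj_on_subset[OF inj T1(1)]
          T1(2)]
        that by auto
  qed
  ultimately show ?thesis unfolding mds_generator_def by blast
qed

section \<open>The construction\<close>

locale mr_lrc_construction =
  fixes q e m a r g h k s :: nat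
    and pt :: "nat \<Rightarrow> 'F::{field,finite} option"
    and \<omega> \<theta> \<xi> :: "nat \<Rightarrow> 'F"
  assumes q_def: "q = CHAR('F) ^ e"
    and a_pos: "0 < a" and a_le_r: "a \<le> r"
    and pt_inj: "inj_on pt {..<r}" and pt_fixed: "\<forall>j<r. set_option (pt j) \<subseteq> pow_fixed q"
    and \<omega>_fixed: "\<forall>t<k. \<omega> t \<in> pow_fixed (q ^ m)" and \<omega>_indep: "lin_indep_over (pow_fixed q) k \<omega>"
    and \<theta>_indep: "lin_indep_over (pow_fixed (q ^ m)) s \<theta>"
    and \<xi>_inj: "inj_on \<xi> {..<g}" and \<xi>_fixed: "\<forall>b<g. \<xi> b \<in> pow_fixed (q ^ m)"
    and k_ge: "min r (a + h) \<le> k" and s_ge: "min h g \<le> s"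
begin

definition point_weight :: "'F option \<Rightarrow> 'F" where
  "point_weight p = (\<Sum>t<k. proj_vandermonde k p t * \<omega> t)"

definition block_weight :: "nat \<Rightarrow> 'F" where
  "block_weight b = (\<Sum>i<s. \<xi> b ^ i * \<theta> i)"

definition column_weight :: "nat \<Rightarrow> 'F" where
  "column_weight j = block_weight (j div r) * point_weight (pt (j mod r))"

definition parity_matrix :: "nat \<Rightarrow> nat \<Rightarrow> 'F" where
  "parity_matrix i j =
     (if i < g * a then if j div r = i div a then proj_vandermonde a (pt (j mod r)) (i mod a) else 0
      else column_weight j ^ (q ^ (i - g * a)))"

lemma q_pos: "0 < q"
  using q_def CHAR_power_gt_0 by simp

lemma r_pos: "0 < r"
  using a_pos a_le_r by simp

lemma q_power_m: "q ^ m = CHAR('F) ^ (e * m)"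
  by (simp add: q_def power_mult)

lemma proj_vandermonde_pt_fixed: "proj_vandermonde n (pt (j mod r)) t \<in> pow_fixed q"
  using proj_vandermonde_pow_fixed[OF q_pos, of "pt (j mod r)"] pt_fixed r_pos by simp

lemma point_weight_fixed: "point_weight (pt (j mod r)) \<in> pow_fixed (q ^ m)"
  unfolding point_weight_def
  using proj_vandermonde_pt_fixed pow_fixed_subset_power[of q m] \<omega>_fixed
  by (intro pow_fixed_sum[OF q_power_m] pow_fixed_mult) auto

lemma pt_block_inj: "inj_on (\<lambda>j. pt (j mod r)) {j. j div r = b}"
proof (rule inj_onI)
  fix x y assume "x \<in> {j. j div r = b}" "y \<in> {j. j div r = b}" "pt (x mod r) = pt (y mod r)"
  then have "x mod r = y mod r" "x div r = y div r"
    using pt_inj r_pos by (auto simp: inj_on_def)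
  then show "x = y" by (metis div_mult_mod_eq)
qed

lemma local_row_lt:
  assumes "b < g" "t < a"
  shows "b * a + t < g * a"
proof -
  have "b * a + t < (b + 1) * a" using \<open>t < a\<close> by simp
  also have "\<dots> \<le> g * a" using \<open>b < g\<close> by (intro mult_le_mono1) simp
  finally show ?thesis .
qed

lemma parity_matrix_local_row:
  assumes "b < g" "t < a"
  shows "parity_matrix (b * a + t) j
    = (if j div r = b then proj_vandermonde a (pt (j mod r)) t else 0)"
  using assms local_row_lt[OF assms] by (simp add: parity_matrix_def)

lemma parity_matrix_global_row: "parity_matrix (g * a + i) j = column_weight j ^ (q ^ i)"
  by (simp add: parity_matrix_def)

lemma parity_matrix_local_fixed: "i < g * a \<Longrightarrow> parity_matrix i j \<in> pow_fixed q"
  using proj_vandermonde_pt_fixed q_pos by (simp add: parity_matrix_def pow_fixed_def zero_power)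

lemma kernel_on_local_rows:
  "d \<in> kernel_on parity_matrix (g * a) J T \<Longrightarrow> b < g \<Longrightarrow>
    \<forall>t<a. (\<Sum>j\<in>J. d j * parity_matrix (b * a + t) j) = 0"
  using local_row_lt by (simp add: kernel_on_def)

lemma local_rows_vanish:
  assumes "finite S" "b < g"
    and d: "\<forall>t<a. (\<Sum>j\<in>S. d j * parity_matrix (b * a + t) j) = 0"
    and T: "T \<subseteq> {j \<in> S. j div r = b}" "card T \<le> a"
    and zero: "\<forall>j\<in>{j \<in> S. j div r = b} - T. d j = 0"
  shows "\<forall>j\<in>T. d j = 0"
proof (rule proj_vandermonde_indep)
  show "finite T" by (rule finite_subset[OF T(1)]) (simp add: \<open>finite S\<close>)
  show "inj_on (\<lambda>j. pt (j mod r)) T"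
    by (rule inj_on_subset[OF pt_block_inj[of b]]) (use T(1) in auto)
  show "\<forall>t<a. (\<Sum>j\<in>T. d j * proj_vandermonde a (pt (j mod r)) t) = 0"
  proof (intro allI impI)
    fix t assume "t < a"
    have "(\<Sum>j\<in>T. d j * proj_vandermonde a (pt (j mod r)) t)
        = (\<Sum>j\<in>{j \<in> S. j div r = b}. d j * proj_vandermonde a (pt (j mod r)) t)"
      by (rule sum.mono_neutral_left) (use assms in auto)
    also have "\<dots> = (\<Sum>j\<in>S. d j * parity_matrix (b * a + t) j)"
      by (simp add: parity_matrix_local_row[OF \<open>b < g\<close> \<open>t < a\<close>] sum.inter_filter[OF \<open>finite S\<close>]
          if_distrib cong: if_cong)
    also have "\<dots> = 0" using d \<open>t < a\<close> by simp
    finally show "(\<Sum>j\<in>T. d j * proj_vandermonde a (pt (j mod r)) t) = 0" .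
  qed
qed (use T in simp)

text \<open>A kernel vector of the local rows is determined by its values off \<open>a\<close> chosen columns
  per group, and there are \<open>h\<close> remaining columns.\<close>

lemma card_kernel_le:
  assumes "mr_pattern g r a h S"
  shows "card (kernel_on parity_matrix (g * a) S S) \<le> card (UNIV :: 'F set) ^ h"
proof -
  note blocks = mr_pattern_blocks[OF assms r_pos]
  obtain P where P: "P \<subseteq> S" "card (S - P) = h" "\<And>b. card {j \<in> P. j div r = b} \<le> a"
    using mr_pattern_split[OF assms r_pos] by blast
  let ?K = "kernel_on parity_matrix (g * a) S S"
  define \<rho> where "\<rho> x = (\<lambda>j. if j \<in> S - P then x j else 0)" for x :: "nat \<Rightarrow> 'F"
  have "inj_on \<rho> ?K"
  proof (rule inj_onI)
    fix x x' assume x: "x \<in> ?K" "x' \<in> ?K" "\<rho> x = \<rho> x'"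
    define d where "d = (\<lambda>j. x j - x' j)"
    have d: "d \<in> ?K" unfolding d_def using kernel_on_diff x by blast
    have off_P: "d j = 0" if "j \<in> S - P" for j
      using fun_cong[OF x(3), of j] that by (simp add: \<rho>_def d_def)
    have on_P: "d j = 0" if "j \<in> P" for j
    proof -
      have "j div r < g" using blocks(2) P(1) that by auto
      have "\<forall>j'\<in>{j' \<in> P. j' div r = j div r}. d j' = 0"
        by (rule local_rows_vanish[OF blocks(1) \<open>j div r < g\<close>
              kernel_on_local_rows[OF d \<open>j div r < g\<close>]])
           (use P off_P in auto)
      then show ?thesis using that by simp
    qed
    have "d = (\<lambda>_. 0)"
      using d off_P on_P by (auto simp: kernel_on_def supported_on_def fun_eq_iff)
    then show "x = x'" by (simp add: d_def fun_eq_iff)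
  qed
  moreover have "\<rho> ` ?K \<subseteq> supported_on (S - P)" by (auto simp: \<rho>_def supported_on_def)
  ultimately have "card ?K \<le> card (supported_on (S - P) :: (nat \<Rightarrow> 'F) set)"
    by (rule card_inj_on_le[where f = \<rho>]) (simp add: finite_supported_on blocks(1))
  also have "\<dots> = card (UNIV :: 'F set) ^ h"
    using card_supported_on[of "S - P"] blocks(1) P(2) by simp
  finally show ?thesis .
qed

lemma point_weight_lin_indep:
  fixes T :: "nat set"
  assumes "finite T" "inj_on P T" "card T \<le> k" "\<forall>j\<in>T. set_option (P j) \<subseteq> pow_fixed q"
    and c: "\<forall>j\<in>T. c j \<in> pow_fixed q" and sum: "(\<Sum>j\<in>T. c j * point_weight (P j)) = 0"
  shows "\<forall>j\<in>T. c j = 0"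
proof -
  define co where "co t = (\<Sum>j\<in>T. c j * proj_vandermonde k (P j) t)" for t
  have "(\<Sum>t<k. co t * \<omega> t) = (\<Sum>j\<in>T. c j * point_weight (P j))"
    by (simp add: co_def point_weight_def sum_distrib_left sum_distrib_right sum.swap[of _ T]
        mult_ac)
  moreover have "co t \<in> pow_fixed q" for t
    unfolding co_def using c assms(4)
    by (intro pow_fixed_sum[OF q_def] pow_fixed_mult proj_vandermonde_pow_fixed q_pos) auto
  ultimately have "\<forall>t<k. co t = 0" using \<omega>_indep sum by (simp add: lin_indep_over_def)
  then show ?thesis using proj_vandermonde_indep[OF assms(1-3)] by (simp add: co_def)
qed

lemma block_weight_lin_indep:
  assumes "I \<subseteq> {..<g}" "card I \<le> s" and \<mu>: "\<forall>b\<in>I. \<mu> b \<in> pow_fixed (q ^ m)"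
    and sum: "(\<Sum>b\<in>I. \<mu> b * block_weight b) = 0"
  shows "\<forall>b\<in>I. \<mu> b = 0"
proof -
  define co where "co i = (\<Sum>b\<in>I. \<mu> b * \<xi> b ^ i)" for i
  have "(\<Sum>i<s. co i * \<theta> i) = (\<Sum>b\<in>I. \<mu> b * block_weight b)"
    by (simp add: co_def block_weight_def sum_distrib_left sum_distrib_right sum.swap[of _ I]
        mult_ac)
  moreover have "co i \<in> pow_fixed (q ^ m)" for i
    unfolding co_def using \<mu> \<xi>_fixed assms(1)
    by (intro pow_fixed_sum[OF q_power_m] pow_fixed_mult pow_fixed_power) auto
  ultimately have "\<forall>i<s. co i = 0" using \<theta>_indep sum by (simp add: lin_indep_over_def)
  moreover have "finite I" using assms(1) finite_subset by blast
  ultimately show ?thesis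
    using vandermonde_indep[of I \<xi> s \<mu>] inj_on_subset[OF \<xi>_inj assms(1)] assms(2)
    by (simp add: co_def)
qed

lemma column_weight_sum_blocks:
  assumes "finite S" "\<And>j. j \<in> S \<Longrightarrow> j div r < g"
  shows "(\<Sum>j\<in>S. c j * column_weight j)
    = (\<Sum>b<g. (\<Sum>j\<in>{j \<in> S. j div r = b}. c j * point_weight (pt (j mod r))) * block_weight b)"
proof -
  have "(\<Sum>j\<in>S. c j * column_weight j) = (\<Sum>b<g. \<Sum>j\<in>{j \<in> S. j div r = b}. c j * column_weight j)"
    using assms by (intro sum.group[symmetric]) auto
  also have "\<dots>
      = (\<Sum>b<g. \<Sum>j\<in>{j \<in> S. j div r = b}. c j * point_weight (pt (j mod r)) * block_weight b)"
    by (intro sum.cong refl) (auto simp: column_weight_def mult_ac)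
  finally show ?thesis by (simp add: sum_distrib_right)
qed

lemma lin_indep_on_kernel_column_weight:
  assumes S: "mr_pattern g r a h S"
  shows "lin_indep_on_kernel q parity_matrix (g * a) S S column_weight"
  unfolding lin_indep_on_kernel_def
proof (intro ballI impI)
  fix c assume c: "c \<in> kernel_on parity_matrix (g * a) S S"
    and "(\<forall>j. c j \<in> pow_fixed q) \<and> (\<Sum>j\<in>S. c j * column_weight j) = 0"
  then have c_fixed: "\<forall>j. c j \<in> pow_fixed q" and sum: "(\<Sum>j\<in>S. c j * column_weight j) = 0"
    by auto
  note blocks = mr_pattern_blocks[OF S r_pos]
  define block where "block b = {j \<in> S. j div r = b}" for b
  define \<mu> where "\<mu> b = (\<Sum>j\<in>block b. c j * point_weight (pt (j mod r)))" for b
  define I where "I = {b \<in> {..<g}. a < card (block b)}"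
  have light: "\<forall>j\<in>block b. c j = 0" if "b < g" "card (block b) \<le> a" for b
    using local_rows_vanish[OF blocks(1) that(1) kernel_on_local_rows[OF c that(1)], of "block b"]
      that(2) by (simp add: block_def)
  have light_\<mu>: "\<mu> b = 0" if "b < g" "b \<notin> I" for b
    using light[of b] that by (simp add: I_def \<mu>_def not_less)
  have "(\<Sum>b<g. \<mu> b * block_weight b) = (\<Sum>b\<in>I. \<mu> b * block_weight b)"
    by (rule sum.mono_neutral_right) (auto simp: I_def light_\<mu>)
  moreover have "(\<Sum>b<g. \<mu> b * block_weight b) = 0"
    using sum column_weight_sum_blocks[OF blocks(1,2)] by (simp add: \<mu>_def block_def)
  moreover have "card I \<le> s"
    using order.trans[OF mr_pattern_heavy_blocks[OF S r_pos] s_ge] by (simp add: I_def block_def)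
  moreover have "\<mu> b \<in> pow_fixed (q ^ m)" for b
    unfolding \<mu>_def using c_fixed pow_fixed_subset_power[of q m] point_weight_fixed
    by (intro pow_fixed_sum[OF q_power_m] pow_fixed_mult) auto
  ultimately have "\<forall>b\<in>I. \<mu> b = 0"
    using block_weight_lin_indep[of I] by (simp add: I_def subset_eq)
  then have \<mu>_zero: "\<mu> b = 0" if "b < g" for b
    using light_\<mu>[OF that] by blast
  have "\<forall>j\<in>block b. c j = 0" if "b < g" for b
  proof (rule point_weight_lin_indep)
    show "finite (block b)" using blocks(1) by (simp add: block_def)
    show "inj_on (\<lambda>j. pt (j mod r)) (block b)"
      by (rule inj_on_subset[OF pt_block_inj[of b]]) (auto simp: block_def)
    show "card (block b) \<le> k"
      using order.trans[OF mr_pattern_block_card_le[OF S r_pos that] k_ge] by (simp add: block_def)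
    show "\<forall>j\<in>block b. set_option (pt (j mod r)) \<subseteq> pow_fixed q"
      using pt_fixed r_pos by simp
  qed (use c_fixed \<mu>_zero[OF that] \<mu>_def in auto)
  then have "\<forall>j\<in>S. c j = 0" using blocks(2) by (auto simp: block_def)
  then show "c = (\<lambda>_. 0)" using c by (auto simp: kernel_on_def supported_on_def fun_eq_iff)
qed

lemma parity_matrix_cols_indep:
  assumes S: "mr_pattern g r a h S"
  shows "cols_indep parity_matrix (g * a + h) S"
  unfolding cols_indep_def
proof (rule allI, rule impI)
  fix c assume c: "\<forall>i<g * a + h. (\<Sum>j\<in>S. c j * parity_matrix i j) = 0"
  define x where "x j = (if j \<in> S then c j else 0)" for j
  have sum_x: "(\<Sum>j\<in>S. x j * f j) = (\<Sum>j\<in>S. c j * f j)" for f :: "nat \<Rightarrow> 'F"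
    by (rule sum.cong) (simp_all add: x_def)
  have x: "x \<in> kernel_on parity_matrix (g * a) S S"
    using c by (simp add: kernel_on_def supported_on_def x_def sum_x)
  have orth: "\<forall>i<h. (\<Sum>j\<in>S. x j * column_weight j ^ (q ^ i)) = 0"
    using c by (simp add: sum_x flip: parity_matrix_global_row)
  have fixed: "\<forall>i<g * a. \<forall>j\<in>S. parity_matrix i j \<in> pow_fixed q"
    using parity_matrix_local_fixed by blast
  have "x = (\<lambda>_. 0)"
    by (rule kernel_on_frobenius_orthogonal_zero[OF q_def mr_pattern_blocks(1)[OF S r_pos] fixed
          lin_indep_on_kernel_column_weight[OF S] card_kernel_le[OF S] x orth])
  then show "\<forall>j\<in>S. c j = 0" by (metis x_def)
qed

lemma parity_matrix_rows_indep:
  assumes "g * a + h \<le> g * r"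
  shows "\<forall>c. (\<forall>j<g * r. (\<Sum>i<g * a + h. c i * parity_matrix i j) = 0) \<longrightarrow> (\<forall>i<g * a + h. c i = 0)"
proof (rule allI, rule impI)
  fix c assume c: "\<forall>j<g * r. (\<Sum>i<g * a + h. c i * parity_matrix i j) = 0"
  obtain S where S: "mr_pattern g r a h S" using exists_mr_pattern[OF a_le_r assms] by blast
  then have "S \<subseteq> {..<g * r}" "card S = card {..<g * a + h}" by (simp_all add: mr_pattern_def)
  then show "\<forall>i<g * a + h. c i = 0"
    using square_system_rows_indep[OF finite_lessThan mr_pattern_blocks(1)[OF S r_pos],
        where M = parity_matrix and c = c]
      parity_matrix_cols_indep[OF S] c by (auto simp: cols_indep_def)
qed

lemma parity_matrix_local_mds:
  assumes "b < g"
  shows "mds_generator (\<lambda>i j. parity_matrix (b * a + i) (b * r + j)) a r"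
proof -
  have "parity_matrix (b * a + i) (b * r + j) = proj_vandermonde a (pt j) i"
    if "i < a" "j < r" for i j
    using parity_matrix_local_row[OF assms that(1)] that(2) by simp
  then have "mds_generator (\<lambda>i j. parity_matrix (b * a + i) (b * r + j)) a r
      = mds_generator (\<lambda>i j. proj_vandermonde a (pt j) i) a r"
    by (intro mds_generator_cong) simp
  then show ?thesis using mds_generator_proj_vandermonde[OF pt_inj a_pos a_le_r] by simp
qed

theorem MR_LRC_parity_check_parity_matrix:
  assumes "g * a + h \<le> g * r"
  shows "MR_LRC_parity_check parity_matrix g r h a"
  unfolding MR_LRC_parity_check_def
proof (intro conjI)
  show "\<forall>i<g * a. \<forall>j<g * r. j div r \<noteq> i div a \<longrightarrow> parity_matrix i j = 0"
    by (simp add: parity_matrix_def)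
  show "\<forall>S. S \<subseteq> {..<g * r} \<and> card S = g * a + h \<and> (\<forall>b<g. a \<le> card (S \<inter> {b * r..<(b + 1) * r})) \<longrightarrow>
      cols_indep parity_matrix (g * a + h) S"
    using parity_matrix_cols_indep by (simp add: mr_pattern_def)
qed (use parity_matrix_rows_indep[OF assms] parity_matrix_local_mds in blast)+

end

lemma exists_MR_LRC_parity_check:
  fixes q e m a r g h :: nat
  assumes q: "q = CHAR('F::{field,finite}) ^ e" "0 < e"
    and card: "card (UNIV :: 'F set) = q ^ (m * min h g)"
    and "0 < a" "a \<le> r" "r \<le> q + 1" "0 < h" "0 < g"
    and "min r (a + h) \<le> m" "g \<le> q ^ m" "g * a + h \<le> g * r"
  shows "\<exists>H :: nat \<Rightarrow> nat \<Rightarrow> 'F. MR_LRC_parity_check H g r h a"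
proof -
  define s where "s = min h g"
  define k where "k = min r (a + h)"
  let ?K = "pow_fixed q :: 'F set" and ?L = "pow_fixed (q ^ m) :: 'F set"
  have "2 \<le> CHAR('F)" using prime_CHAR_finite prime_ge_2_nat by blast
  then have q2: "2 \<le> q" using q self_le_power[of "CHAR('F)" e] by simp
  have "0 < m" "0 < s" using assms(4-9) by (auto simp: s_def)
  then have Q2: "2 \<le> q ^ m" using q2 self_le_power[of q m] by simp
  have qm: "q ^ m = CHAR('F) ^ (e * m)" using q(1) by (simp add: power_mult)
  have card_K: "card ?K = q"
    using card_pow_fixed[of q "m * s"] card q2 \<open>0 < m\<close> \<open>0 < s\<close> by (simp add: s_def)
  have card_L: "card ?L = q ^ m"
    using card_pow_fixed[of "q ^ m" s] card Q2 \<open>0 < s\<close> by (simp add: s_def power_mult)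
  have card_points: "card {..<r} \<le> card (insert None (Some ` ?K))"
    using card_K \<open>r \<le> q + 1\<close> by (simp add: card_image)
  then obtain pt where pt: "pt ` {..<r} \<subseteq> insert None (Some ` ?K)" "inj_on pt {..<r}"
    using card_le_inj[OF finite_lessThan _ card_points] by auto
  have "k \<le> m" using assms(9) by (simp add: k_def)
  have "\<forall>k'<k. card ?K ^ k' < card ?L"
    using card_K card_L q2 \<open>k \<le> m\<close> by (auto intro: power_strict_increasing simp: k_def)
  then obtain \<omega> where \<omega>: "\<forall>t<k. \<omega> t \<in> ?L" "lin_indep_over ?K k \<omega>"
    using exists_lin_indep_over[of ?K k ?L] pow_fixed_divide pow_fixed_minus[OF q(1)] by blast
  have "\<forall>k'<s. card ?L ^ k' < card (UNIV :: 'F set)"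
    using card_L card Q2 by (auto intro: power_strict_increasing simp: s_def power_mult)
  then obtain \<theta> where \<theta>: "lin_indep_over ?L s \<theta>"
    using exists_lin_indep_over[of ?L s UNIV] pow_fixed_divide pow_fixed_minus[OF qm] by blast
  obtain \<xi> where \<xi>: "\<xi> ` {..<g} \<subseteq> ?L" "inj_on \<xi> {..<g}"
    using card_le_inj[of "{..<g}" ?L] card_L \<open>g \<le> q ^ m\<close> by auto
  interpret mr_lrc_construction q e m a r g h k s pt \<omega> \<theta> \<xi>
    using q assms(4,5) pt \<omega> \<theta> \<xi> by unfold_locales (auto simp: k_def s_def)
  show ?thesis using MR_LRC_parity_check_parity_matrix \<open>g * a + h \<le> g * r\<close> by blast
qed

theorem lemma3p11:
  fixes q a r g h m n :: nat
  assumes "prime_power q"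
    and "a > 0" and "r > 0" and "g > 0" and "h > 0" and "m > 0"
    and "a \<le> r" and "r \<le> q + 1" and "m \<ge> h + a" and "g*a + h < g*r"
    and "n = r*g"
    and "real (q ^ m) \<ge> real (m*n) / real r"
    and "card (UNIV :: 'F set) = q ^ (min (m*h) (m*n div r))"
  shows "\<exists>H :: nat \<Rightarrow> nat \<Rightarrow> 'F::{field,finite}. MR_LRC_parity_check H g r h a"
proof -
  obtain p e where p: "prime p" "0 < e" "q = p ^ e"
    using assms(1) unfolding prime_power_def by blast
  have "m * n div r = m * g" and "real (m * n) / real r = real (m * g)"
    using \<open>n = r * g\<close> \<open>r > 0\<close> by simp_all
  then have card: "card (UNIV :: 'F set) = q ^ (m * min h g)" and "real (m * g) \<le> real (q ^ m)"
    using assms(12,13) by (simp_all add: nat_mult_min_right)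
  then have "CHAR('F) = p" using CHAR_eq_prime_of_card[OF p(1)] p(3) by (simp flip: power_mult)
  moreover have "g \<le> q ^ m"
  proof -
    have "m * g \<le> q ^ m" using \<open>real (m * g) \<le> real (q ^ m)\<close> by (simp only: of_nat_le_iff)
    moreover have "g \<le> m * g" using \<open>m > 0\<close> by simp
    ultimately show ?thesis by linarith
  qed
  ultimately show ?thesis
    using exists_MR_LRC_parity_check[OF _ p(2) card] assms p(3) by simp
qed

end
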